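(* Let $(\mathcal C,\otimes,\mathbb I)$ be a monoidal category with pushouts, $(H,\Delta,\varepsilon)$ a coalgebra in $\mathcal C$, $(X,X\bullet H,\pi_X,\rho_X)$ a geometric partial $H$-comodule and $(Y,\delta)$ a global $H$-comodule. If $p:Y\to X$ is a morphism in $\mathcal C$ which is a morphism of geometric partial comodules $\mathcal I(Y)\to X$ (i.e. $\pi_X\circ(p\otimes H)\circ\delta=\rho_X\circ p$) and such that $X\bullet H$, with $\rho_X$ and $\pi_X$, is a pushout in $\mathcal C$ of $p:Y\to X$ and $(p\otimes H)\circ\delta:Y\to X\otimes H$, then $p$ is an epimorphism.
   Context: $\mathcal C$ is treated as strict monoidal; the identity of an object $X$ is also written $X$. A partial comodule datum is $(X,X\bullet H,\pi_X,\rho_X)$ with $\rho_X:X\to X\bullet H$ and $\pi_X:X\otimes H\to X\bullet H$ an epimorphism. For such a datum let: $(X\bullet H)\bullet H$ be the pushout of $\pi_X$ and $\rho_X\otimes H$, with coprojections $\rho_X\bullet H$ and $\pi_{X\bullet H}$; $X\bullet(H\otimes H)$ the pushout of $\pi_X$ and $X\otimes\Delta$, with coprojections $X\bullet\Delta$ and $\pi_{X,\Delta}:X\otimes H\otimes H\to X\bullet(H\otimes H)$; $X\bullet(H\bullet H)$ the pushout of $\pi_{X,\Delta}$ and $\pi_X\otimes H$, with coprojections $\pi'_X$ and $\pi'_{X,\Delta}$. A geometric partial $H$-comodule is a datum such that (GP1) there is $X\bullet\varepsilon:X\bullet H\to X$ with $(X\bullet\varepsilon)\circ\rho_X=\mathrm{id}_X$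 and $(X\bullet\varepsilon)\circ\pi_X=X\otimes\varepsilon$; (GP2) there is an isomorphism $\theta:X\bullet(H\bullet H)\to(X\bullet H)\bullet H$ with $\theta\circ\pi'_{X,\Delta}=\pi_{X\bullet H}$ and $(\rho_X\bullet H)\circ\rho_X=\theta\circ\pi'_X\circ(X\bullet\Delta)\circ\rho_X$. For a global comodule $(Y,\delta)$, $\mathcal I(Y)=(Y,Y\otimes H,\mathrm{id},\delta)$. *)

theory Defs
  imports Main
begin

text \<open>A strict monoidal category presented concretely: a set of objects, hom-sets,
composition (comp g f = g o f), identities, tensor on objects and on morphisms, unit.\<close>

record ('o, 'm) moncat =
  Ob :: "'o set"
  Hom :: "'o \<Rightarrow> 'o \<Rightarrow> 'm set"
  comp :: "'m \<Rightarrow> 'm \<Rightarrow> 'm"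
  idm :: "'o \<Rightarrow> 'm"
  tens_o :: "'o \<Rightarrow> 'o \<Rightarrow> 'o"
  tens_m :: "'m \<Rightarrow> 'm \<Rightarrow> 'm"
  unit_o :: "'o"

definition category :: "('o, 'm, 'z) moncat_scheme \<Rightarrow> bool" where
  "category C \<longleftrightarrow>
     (\<forall>A B f. f \<in> Hom C A B \<longrightarrow> A \<in> Ob C \<and> B \<in> Ob C) \<and>
     (\<forall>A B A' B' f. f \<in> Hom C A B \<longrightarrow> f \<in> Hom C A' B' \<longrightarrow> A = A' \<and> B = B') \<and>
     (\<forall>A \<in> Ob C. idm C A \<in> Hom C A A) \<and>
     (\<forall>A B D f g. f \<in> Hom C A B \<longrightarrow> g \<in> Hom C B D \<longrightarrow> comp C g f \<in> Hom C A D) \<and>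
     (\<forall>A B f. f \<in> Hom C A B \<longrightarrow> comp C (idm C B) f = f \<and> comp C f (idm C A) = f) \<and>
     (\<forall>A B D E f g h. f \<in> Hom C A B \<longrightarrow> g \<in> Hom C B D \<longrightarrow> h \<in> Hom C D E \<longrightarrow>
        comp C h (comp C g f) = comp C (comp C h g) f)"

definition strict_monoidal_category :: "('o, 'm, 'z) moncat_scheme \<Rightarrow> bool" where
  "strict_monoidal_category C \<longleftrightarrow>
     category C \<and>
     unit_o C \<in> Ob C \<and>
     (\<forall>A \<in> Ob C. \<forall>B \<in> Ob C. tens_o C A B \<in> Ob C) \<and>
     (\<forall>A B A' B' f g. f \<in> Hom C A B \<longrightarrow> g \<in> Hom C A' B' \<longrightarrow>
        tens_m C f g \<in> Hom C (tens_o C A A') (tens_o C B B')) \<and>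
     (\<forall>A \<in> Ob C. \<forall>B \<in> Ob C. tens_m C (idm C A) (idm C B) = idm C (tens_o C A B)) \<and>
     (\<forall>A B D A' B' D' f g f' g'. f \<in> Hom C A B \<longrightarrow> g \<in> Hom C B D \<longrightarrow>
        f' \<in> Hom C A' B' \<longrightarrow> g' \<in> Hom C B' D' \<longrightarrow>
        tens_m C (comp C g f) (comp C g' f') = comp C (tens_m C g g') (tens_m C f f')) \<and>
     (\<forall>A \<in> Ob C. \<forall>B \<in> Ob C. \<forall>D \<in> Ob C.
        tens_o C (tens_o C A B) D = tens_o C A (tens_o C B D)) \<and>
     (\<forall>A B A' B' A'' B'' f g h. f \<in> Hom C A B \<longrightarrow> g \<in> Hom C A' B' \<longrightarrow> h \<in> Hom C A'' B'' \<longrightarrow>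
        tens_m C (tens_m C f g) h = tens_m C f (tens_m C g h)) \<and>
     (\<forall>A \<in> Ob C. tens_o C (unit_o C) A = A \<and> tens_o C A (unit_o C) = A) \<and>
     (\<forall>A B f. f \<in> Hom C A B \<longrightarrow>
        tens_m C (idm C (unit_o C)) f = f \<and> tens_m C f (idm C (unit_o C)) = f)"

definition epi :: "('o, 'm, 'z) moncat_scheme \<Rightarrow> 'm \<Rightarrow> 'o \<Rightarrow> 'o \<Rightarrow> bool" where
  "epi C e A B \<longleftrightarrow> e \<in> Hom C A B \<and>
     (\<forall>Z f g. f \<in> Hom C B Z \<longrightarrow> g \<in> Hom C B Z \<longrightarrow> comp C f e = comp C g e \<longrightarrow> f = g)"

definition iso :: "('o, 'm, 'z) moncat_scheme \<Rightarrow> 'm \<Rightarrow> 'o \<Rightarrow> 'o \<Rightarrow> bool" where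
  "iso C f A B \<longleftrightarrow> f \<in> Hom C A B \<and>
     (\<exists>g \<in> Hom C B A. comp C g f = idm C A \<and> comp C f g = idm C B)"

definition is_pushout :: "('o, 'm, 'z) moncat_scheme \<Rightarrow> 'o \<Rightarrow> 'o \<Rightarrow> 'o \<Rightarrow> 'm \<Rightarrow> 'm \<Rightarrow>
    'o \<Rightarrow> 'm \<Rightarrow> 'm \<Rightarrow> bool" where
  "is_pushout C A B D f g P i j \<longleftrightarrow>
     f \<in> Hom C A B \<and> g \<in> Hom C A D \<and> i \<in> Hom C B P \<and> j \<in> Hom C D P \<and>
     comp C i f = comp C j g \<and>
     (\<forall>Z u v. u \<in> Hom C B Z \<longrightarrow> v \<in> Hom C D Z \<longrightarrow> comp C u f = comp C v g \<longrightarrow>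
        (\<exists>!k. k \<in> Hom C P Z \<and> comp C k i = u \<and> comp C k j = v))"

definition has_pushouts :: "('o, 'm, 'z) moncat_scheme \<Rightarrow> bool" where
  "has_pushouts C \<longleftrightarrow>
     (\<forall>A B D f g. f \<in> Hom C A B \<longrightarrow> g \<in> Hom C A D \<longrightarrow>
        (\<exists>P i j. is_pushout C A B D f g P i j))"

definition coalgebra :: "('o, 'm, 'z) moncat_scheme \<Rightarrow> 'o \<Rightarrow> 'm \<Rightarrow> 'm \<Rightarrow> bool" where
  "coalgebra C H \<Delta> \<epsilon> \<longleftrightarrow>
     H \<in> Ob C \<and> \<Delta> \<in> Hom C H (tens_o C H H) \<and> \<epsilon> \<in> Hom C H (unit_o C) \<and>
     comp C (tens_m C \<Delta> (idm C H)) \<Delta> = comp C (tens_m C (idm C H) \<Delta>) \<Delta> \<and>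
     comp C (tens_m C \<epsilon> (idm C H)) \<Delta> = idm C H \<and>
     comp C (tens_m C (idm C H) \<epsilon>) \<Delta> = idm C H"

definition global_comodule :: "('o, 'm, 'z) moncat_scheme \<Rightarrow> 'o \<Rightarrow> 'm \<Rightarrow> 'm \<Rightarrow>
    'o \<Rightarrow> 'm \<Rightarrow> bool" where
  "global_comodule C H \<Delta> \<epsilon> Y \<delta> \<longleftrightarrow>
     Y \<in> Ob C \<and> \<delta> \<in> Hom C Y (tens_o C Y H) \<and>
     comp C (tens_m C \<delta> (idm C H)) \<delta> = comp C (tens_m C (idm C Y) \<Delta>) \<delta> \<and>
     comp C (tens_m C (idm C Y) \<epsilon>) \<delta> = idm C Y"

definition partial_comodule_datum :: "('o, 'm, 'z) moncat_scheme \<Rightarrow> 'o \<Rightarrow>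
    'o \<Rightarrow> 'o \<Rightarrow> 'm \<Rightarrow> 'm \<Rightarrow> bool" where
  "partial_comodule_datum C H X XH \<pi> \<rho> \<longleftrightarrow>
     X \<in> Ob C \<and> XH \<in> Ob C \<and> \<rho> \<in> Hom C X XH \<and> epi C \<pi> (tens_o C X H) XH"

definition geometric_partial_comodule :: "('o, 'm, 'z) moncat_scheme \<Rightarrow> 'o \<Rightarrow> 'm \<Rightarrow> 'm \<Rightarrow>
    'o \<Rightarrow> 'o \<Rightarrow> 'm \<Rightarrow> 'm \<Rightarrow> bool" where
  "geometric_partial_comodule C H \<Delta> \<epsilon> X XH \<pi> \<rho> \<longleftrightarrow>
     partial_comodule_datum C H X XH \<pi> \<rho> \<and>
     \<comment> \<open>GP1\<close>
     (\<exists>e \<in> Hom C XH X. comp C e \<rho> = idm C X \<and> comp C e \<pi> = tens_m C (idm C X) \<epsilon>) \<and>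
     \<comment> \<open>GP2 (for a choice of the three pushouts; independent of the choice)\<close>
     (\<exists>XHH rhoH piXH XHtH XDelta piXD XHbH pi' pi'XD \<theta>.
        \<comment> \<open>(X\<bullet>H)\<bullet>H = XHH: pushout of \<pi> and \<rho>\<otimes>H, coprojections \<rho>\<bullet>H, \<pi>_{X\<bullet>H}\<close>
        is_pushout C (tens_o C X H) XH (tens_o C XH H) \<pi> (tens_m C \<rho> (idm C H))
          XHH rhoH piXH \<and>
        \<comment> \<open>X\<bullet>(H\<otimes>H) = XHtH: pushout of \<pi> and X\<otimes>\<Delta>, coprojections X\<bullet>\<Delta>, \<pi>_{X,\<Delta>}\<close>
        is_pushout C (tens_o C X H) XH (tens_o C X (tens_o C H H)) \<pi> (tens_m C (idm C X) \<Delta>)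
          XHtH XDelta piXD \<and>
        \<comment> \<open>X\<bullet>(H\<bullet>H) = XHbH: pushout of \<pi>_{X,\<Delta>} and \<pi>\<otimes>H, coprojections \<pi>'_X, \<pi>'_{X,\<Delta>}\<close>
        is_pushout C (tens_o C X (tens_o C H H)) XHtH (tens_o C XH H) piXD (tens_m C \<pi> (idm C H))
          XHbH pi' pi'XD \<and>
        iso C \<theta> XHbH XHH \<and>
        comp C \<theta> pi'XD = piXH \<and>
        comp C rhoH \<rho> = comp C \<theta> (comp C pi' (comp C XDelta \<rho>)))"

end

theory Submission
  imports Defs
begin

text \<open>By counitality of \<open>\<delta>\<close>, \<open>(X \<otimes> \<epsilon>) \<circ> (p \<otimes> H) \<circ> \<delta> = p\<close>. Hence if \<open>f \<circ> p = g \<circ> p\<close>, the pair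
  \<open>(f, g \<circ> (X \<otimes> \<epsilon>))\<close> is a cocone on the pushout span and induces \<open>k : X \<bullet> H \<rightarrow> Z\<close>. After the
  epimorphism \<open>\<pi>\<close>, \<open>k\<close> agrees with \<open>g \<circ> (X \<bullet> \<epsilon>)\<close>, so the two are equal, and precomposing
  with \<open>\<rho>\<close> gives \<open>f = g\<close> since \<open>X \<bullet> \<epsilon>\<close> is a retraction of \<open>\<rho>\<close> (GP1).\<close>

lemma category_comp_in_Hom:
  assumes "category C" "f \<in> Hom C A B" "g \<in> Hom C B D"
  shows "comp C g f \<in> Hom C A D"
  using assms unfolding category_def by meson+

lemma category_idm_in_Hom:
  assumes "category C" "A \<in> Ob C"
  shows "idm C A \<in> Hom C A A"
  using assms unfolding category_def by meson+

lemma category_Hom_objects: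
  assumes "category C" "f \<in> Hom C A B"
  shows "A \<in> Ob C" "B \<in> Ob C"
  using assms unfolding category_def by meson+

lemma category_comp_idm_left:
  assumes "category C" "f \<in> Hom C A B"
  shows "comp C (idm C B) f = f"
  using assms unfolding category_def by meson+

lemma category_comp_idm_right:
  assumes "category C" "f \<in> Hom C A B"
  shows "comp C f (idm C A) = f"
  using assms unfolding category_def by meson+

lemma category_comp_assoc:
  assumes "category C" "f \<in> Hom C A B" "g \<in> Hom C B D" "h \<in> Hom C D E"
  shows "comp C h (comp C g f) = comp C (comp C h g) f"
  using assms unfolding category_def by meson+

lemma strict_monoidal_category_category:
  "strict_monoidal_category C \<Longrightarrow> category C"
  unfolding strict_monoidal_category_def by meson

lemma strict_monoidal_tens_m_in_Hom:
  assumes "strict_monoidal_category C" "f \<in> Hom C A B" "g \<in> Hom C A' B'"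
  shows "tens_m C f g \<in> Hom C (tens_o C A A') (tens_o C B B')"
  using assms unfolding strict_monoidal_category_def by meson

lemma strict_monoidal_interchange:
  assumes "strict_monoidal_category C"
    and "f \<in> Hom C A B" "g \<in> Hom C B D" "f' \<in> Hom C A' B'" "g' \<in> Hom C B' D'"
  shows "tens_m C (comp C g f) (comp C g' f') = comp C (tens_m C g g') (tens_m C f f')"
  using assms unfolding strict_monoidal_category_def by meson

lemma strict_monoidal_tens_o_unit_right:
  "strict_monoidal_category C \<Longrightarrow> A \<in> Ob C \<Longrightarrow> tens_o C A (unit_o C) = A"
  unfolding strict_monoidal_category_def by meson

lemma strict_monoidal_tens_m_unit_right:
  "strict_monoidal_category C \<Longrightarrow> f \<in> Hom C A B \<Longrightarrow> tens_m C f (idm C (unit_o C)) = f"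
  unfolding strict_monoidal_category_def by meson

lemma tens_m_eq_comp_idm_tens_left:
  assumes C: "strict_monoidal_category C" and f: "f \<in> Hom C A B" and g: "g \<in> Hom C A' B'"
  shows "tens_m C f g = comp C (tens_m C (idm C B) g) (tens_m C f (idm C A'))"
proof -
  have cat: "category C" using C by (rule strict_monoidal_category_category)
  have idB: "idm C B \<in> Hom C B B" and idA': "idm C A' \<in> Hom C A' A'"
    using category_idm_in_Hom category_Hom_objects cat f g by metis+
  show ?thesis
    using strict_monoidal_interchange[OF C f idB idA' g]
      category_comp_idm_left[OF cat f] category_comp_idm_right[OF cat g] by simp
qed

lemma tens_m_eq_comp_tens_idm_left:
  assumes C: "strict_monoidal_category C" and f: "f \<in> Hom C A B" and g: "g \<in> Hom C A' B'"
  shows "tens_m C f g = comp C (tens_m C f (idm C B')) (tens_m C (idm C A) g)"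
proof -
  have cat: "category C" using C by (rule strict_monoidal_category_category)
  have idA: "idm C A \<in> Hom C A A" and idB': "idm C B' \<in> Hom C B' B'"
    using category_idm_in_Hom category_Hom_objects cat f g by metis+
  show ?thesis
    using strict_monoidal_interchange[OF C idA f g idB']
      category_comp_idm_right[OF cat f] category_comp_idm_left[OF cat g] by simp
qed

lemma tens_idm_counit_naturality:
  assumes C: "strict_monoidal_category C"
    and p: "p \<in> Hom C Y X" and \<epsilon>: "\<epsilon> \<in> Hom C H (unit_o C)"
  shows "comp C (tens_m C (idm C X) \<epsilon>) (tens_m C p (idm C H))
           = comp C p (tens_m C (idm C Y) \<epsilon>)"
  using tens_m_eq_comp_idm_tens_left[OF C p \<epsilon>] tens_m_eq_comp_tens_idm_left[OF C p \<epsilon>]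
    strict_monoidal_tens_m_unit_right[OF C p] by simp

lemma tens_idm_counit_in_Hom:
  assumes C: "strict_monoidal_category C"
    and A: "A \<in> Ob C" and \<epsilon>: "\<epsilon> \<in> Hom C H (unit_o C)"
  shows "tens_m C (idm C A) \<epsilon> \<in> Hom C (tens_o C A H) A"
  using strict_monoidal_tens_m_in_Hom[OF C category_idm_in_Hom[OF _ A] \<epsilon>]
    strict_monoidal_tens_o_unit_right[OF C A] strict_monoidal_category_category[OF C] by simp

lemma global_comodule_counit_cancel:
  assumes C: "strict_monoidal_category C"
    and \<epsilon>: "\<epsilon> \<in> Hom C H (unit_o C)"
    and comod: "global_comodule C H \<Delta> \<epsilon> Y \<delta>"
    and p: "p \<in> Hom C Y X"
  shows "comp C (tens_m C (idm C X) \<epsilon>) (comp C (tens_m C p (idm C H)) \<delta>) = p"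
proof -
  have cat: "category C" using C by (rule strict_monoidal_category_category)
  have \<delta>: "\<delta> \<in> Hom C Y (tens_o C Y H)"
    and counit: "comp C (tens_m C (idm C Y) \<epsilon>) \<delta> = idm C Y"
    using comod unfolding global_comodule_def by blast+
  have X: "X \<in> Ob C" and Y: "Y \<in> Ob C" and H: "H \<in> Ob C"
    using category_Hom_objects[OF cat p] category_Hom_objects(1)[OF cat \<epsilon>] by simp_all
  have pH: "tens_m C p (idm C H) \<in> Hom C (tens_o C Y H) (tens_o C X H)"
    using strict_monoidal_tens_m_in_Hom[OF C p category_idm_in_Hom[OF cat H]] .
  have Xe: "tens_m C (idm C X) \<epsilon> \<in> Hom C (tens_o C X H) X"
    using tens_idm_counit_in_Hom[OF C X \<epsilon>] .
  have Ye: "tens_m C (idm C Y) \<epsilon> \<in> Hom C (tens_o C Y H) Y"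
    using tens_idm_counit_in_Hom[OF C Y \<epsilon>] .
  have "comp C (tens_m C (idm C X) \<epsilon>) (comp C (tens_m C p (idm C H)) \<delta>)
      = comp C (comp C (tens_m C (idm C X) \<epsilon>) (tens_m C p (idm C H))) \<delta>"
    using category_comp_assoc[OF cat \<delta> pH Xe] .
  also have "\<dots> = comp C (comp C p (tens_m C (idm C Y) \<epsilon>)) \<delta>"
    using tens_idm_counit_naturality[OF C p \<epsilon>] by simp
  also have "\<dots> = comp C p (comp C (tens_m C (idm C Y) \<epsilon>) \<delta>)"
    using category_comp_assoc[OF cat \<delta> Ye p] by simp
  also have "\<dots> = p"
    using counit category_comp_idm_right[OF cat p] by simp
  finally show ?thesis .
qed

lemma epi_of_pushout_with_retraction:
  assumes cat: "category C"
    and po: "is_pushout C Y X W p q P \<rho> \<pi>"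
    and \<pi>: "epi C \<pi> W P"
    and r: "r \<in> Hom C W X" "comp C r q = p"
    and e: "e \<in> Hom C P X" "comp C e \<rho> = idm C X" "comp C e \<pi> = r"
  shows "epi C p Y X"
  unfolding epi_def
proof (intro conjI allI impI)
  have p: "p \<in> Hom C Y X" and q: "q \<in> Hom C Y W" and \<rho>: "\<rho> \<in> Hom C X P"
    and \<pi>_Hom: "\<pi> \<in> Hom C W P"
    using po unfolding is_pushout_def by blast+
  from p show "p \<in> Hom C Y X" .
  fix Z f g
  assume f: "f \<in> Hom C X Z" and g: "g \<in> Hom C X Z" and fg: "comp C f p = comp C g p"
  have gr: "comp C g r \<in> Hom C W Z"
    using category_comp_in_Hom[OF cat r(1) g] .
  have "comp C f p = comp C (comp C g r) q"
    using fg category_comp_assoc[OF cat q r(1) g] r(2) by simp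
  then obtain k where k: "k \<in> Hom C P Z" "comp C k \<rho> = f" "comp C k \<pi> = comp C g r"
    using po f gr unfolding is_pushout_def by blast
  have "comp C (comp C g e) \<pi> = comp C g r"
    using category_comp_assoc[OF cat \<pi>_Hom e(1) g] e(3) by simp
  then have "k = comp C g e"
    using \<pi> k(1,3) category_comp_in_Hom[OF cat e(1) g] unfolding epi_def by metis
  then have "f = comp C g (comp C e \<rho>)"
    using k(2) category_comp_assoc[OF cat \<rho> e(1) g] by simp
  then show "f = g"
    using e(2) category_comp_idm_right[OF cat g] by simp
qed

theorem lemma3p2:
  fixes C :: "('o, 'm) moncat"
    and H X XH Y :: 'o
    and \<Delta> \<epsilon> \<pi> \<rho> \<delta> p :: 'm
  assumes "strict_monoidal_category C"
    and "has_pushouts C"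
    and "coalgebra C H \<Delta> \<epsilon>"
    and "geometric_partial_comodule C H \<Delta> \<epsilon> X XH \<pi> \<rho>"
    and "global_comodule C H \<Delta> \<epsilon> Y \<delta>"
    and "p \<in> Hom C Y X"
    and "comp C \<pi> (comp C (tens_m C p (idm C H)) \<delta>) = comp C \<rho> p"
    and "is_pushout C Y X (tens_o C X H) p (comp C (tens_m C p (idm C H)) \<delta>) XH \<rho> \<pi>"
  shows "epi C p Y X"
proof -
  have cat: "category C" using assms(1) by (rule strict_monoidal_category_category)
  have \<epsilon>: "\<epsilon> \<in> Hom C H (unit_o C)"
    using assms(3) unfolding coalgebra_def by blast
  have Xe: "tens_m C (idm C X) \<epsilon> \<in> Hom C (tens_o C X H) X"
    using tens_idm_counit_in_Hom[OF assms(1) category_Hom_objects(2)[OF cat assms(6)] \<epsilon>] .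
  have \<pi>: "epi C \<pi> (tens_o C X H) XH"
    using assms(4) unfolding geometric_partial_comodule_def partial_comodule_datum_def by blast
  obtain e where "e \<in> Hom C XH X" "comp C e \<rho> = idm C X"
      "comp C e \<pi> = tens_m C (idm C X) \<epsilon>"
    using assms(4) unfolding geometric_partial_comodule_def by blast
  then show ?thesis
    using epi_of_pushout_with_retraction[OF cat assms(8) \<pi> Xe]
      global_comodule_counit_cancel[OF assms(1) \<epsilon> assms(5) assms(6)] by blast
qed

end
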